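(* Let $(A,\mathit{Con},\mid\!\sim)$ be an abstract nonmonotonic system. Then there is a normal default structure $(B,\mathit{Con}^*,\Delta)$ (with trivial entailment) such that: (1) $B\supseteq A$; (2) for every $X\subseteq B$, $X\in\mathit{Con}$ if and only if $X\subseteq A$ and $X\in\mathit{Con}^*$; (3) for all $X,Y\in\mathit{Con}$, $X\mid\!\sim Y$ if and only if $X\mid\!\sim_B Y$, where $\mid\!\sim_B$ is the skeptical nonmonotonic consequence relation of $(B,\mathit{Con}^*,\Delta)$.
   Context: An abstract nonmonotonic system is a triple $(A,\mathit{Con},\mid\!\sim)$ where $\mathit{Con}$ is a collection of finite subsets of $A$ and $\mid\!\sim\ \subseteq\mathit{Con}\times\mathit{Con}$, satisfying: (1) $X\subseteq Y\in\mathit{Con}\Rightarrow X\in\mathit{Con}$; (2) $a\in A\Rightarrow\{a\}\in\mathit{Con}$; (3) $X\mid\!\sim T\Rightarrow X\cup T\in\mathit{Con}$; (4) $Y\subseteq X\Rightarrow X\mid\!\sim Y$; (5) $X\mid\!\sim T$ and $T\cup X\mid\!\sim Y$ imply $X\mid\!\sim Y$; (6) $X\mid\!\sim Y$ and $X\mid\!\sim Z$ imply $X\mid\!\sim Y\cup Z$. A normal default structure (with trivial entailment) is a triple $(B,\mathit{Con}^*,\Delta)$ where $B$ is a set of tokens; $\mathit{Con}^*$ is a set of finite subsets of $B$ with $\emptyset\in\mathit{Con}^*$, closed under subsets, and containing $\{b\}$ for each $b\in B$; an arbitrary subset of $B$ is consistent if all its finite subsets are in $\mathit{Con}^*$; $\Delta$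 is a set of normal defaults $\frac{X:a}{a}$ with $X\in\mathit{Con}^*$ and $a\in B$. For consistent $x\subseteq B$ and $S\subseteq B$: $\phi(x,S,0)=x$, $\phi(x,S,i+1)=\phi(x,S,i)\cup\{a\mid\frac{X:a}{a}\in\Delta,\ X\subseteq\phi(x,S,i),\ \{a\}\cup S \text{ consistent}\}$, $\Phi(x,S)=\bigcup_i\phi(x,S,i)$; $y$ is an extension of $x$ if $\Phi(x,y)=y$. The skeptical relation: for $X\in\mathit{Con}^*$ and finite $Y\subseteq B$, $X\mid\!\sim_B Y$ iff every element of $Y$ belongs to every extension of $X$. *)

theory Defs
  imports Main
begin

definition ans_system :: "'a set \<Rightarrow> 'a set set \<Rightarrow> ('a set \<Rightarrow> 'a set \<Rightarrow> bool) \<Rightarrow> bool" where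
  "ans_system A Con rel \<longleftrightarrow>
     (\<forall>X\<in>Con. finite X \<and> X \<subseteq> A) \<and>
     (\<forall>X Y. rel X Y \<longrightarrow> X \<in> Con \<and> Y \<in> Con) \<and>
     (\<forall>X Y. X \<subseteq> Y \<and> Y \<in> Con \<longrightarrow> X \<in> Con) \<and>
     (\<forall>a\<in>A. {a} \<in> Con) \<and>
     (\<forall>X T. rel X T \<longrightarrow> X \<union> T \<in> Con) \<and>
     (\<forall>X Y. X \<in> Con \<and> Y \<subseteq> X \<longrightarrow> rel X Y) \<and>
     (\<forall>X T Y. rel X T \<and> rel (T \<union> X) Y \<longrightarrow> rel X Y) \<and>
     (\<forall>X Y Z. rel X Y \<and> rel X Z \<longrightarrow> rel X (Y \<union> Z))"

text \<open>Normal default structure (B, ConS, Delta); a default X:a/a is the pair (X, a).\<close>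
definition normal_default_structure :: "'b set \<Rightarrow> 'b set set \<Rightarrow> ('b set \<times> 'b) set \<Rightarrow> bool" where
  "normal_default_structure B ConS Delta \<longleftrightarrow>
     {} \<in> ConS \<and>
     (\<forall>X\<in>ConS. finite X \<and> X \<subseteq> B) \<and>
     (\<forall>X Y. X \<subseteq> Y \<and> Y \<in> ConS \<longrightarrow> X \<in> ConS) \<and>
     (\<forall>b\<in>B. {b} \<in> ConS) \<and>
     (\<forall>(X, a)\<in>Delta. X \<in> ConS \<and> a \<in> B)"

definition consistent :: "'b set \<Rightarrow> 'b set set \<Rightarrow> 'b set \<Rightarrow> bool" where
  "consistent B ConS x \<longleftrightarrow> x \<subseteq> B \<and> (\<forall>F. finite F \<and> F \<subseteq> x \<longrightarrow> F \<in> ConS)"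

fun phi :: "'b set \<Rightarrow> 'b set set \<Rightarrow> ('b set \<times> 'b) set \<Rightarrow> 'b set \<Rightarrow> 'b set \<Rightarrow> nat \<Rightarrow> 'b set" where
  "phi B ConS Delta x S 0 = x"
| "phi B ConS Delta x S (Suc i) = phi B ConS Delta x S i \<union>
     {a. \<exists>X. (X, a) \<in> Delta \<and> X \<subseteq> phi B ConS Delta x S i \<and> consistent B ConS ({a} \<union> S)}"

definition Phi :: "'b set \<Rightarrow> 'b set set \<Rightarrow> ('b set \<times> 'b) set \<Rightarrow> 'b set \<Rightarrow> 'b set \<Rightarrow> 'b set" where
  "Phi B ConS Delta x S = (\<Union>i. phi B ConS Delta x S i)"

definition extension :: "'b set \<Rightarrow> 'b set set \<Rightarrow> ('b set \<times> 'b) set \<Rightarrow> 'b set \<Rightarrow> 'b set \<Rightarrow> bool" where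
  "extension B ConS Delta x y \<longleftrightarrow> consistent B ConS x \<and> Phi B ConS Delta x y = y"

definition skeptical :: "'b set \<Rightarrow> 'b set set \<Rightarrow> ('b set \<times> 'b) set \<Rightarrow> 'b set \<Rightarrow> 'b set \<Rightarrow> bool" where
  "skeptical B ConS Delta X Y \<longleftrightarrow> X \<in> ConS \<and> finite Y \<and> Y \<subseteq> B \<and>
     (\<forall>y. extension B ConS Delta X y \<longrightarrow> Y \<subseteq> y)"

end

theory Submission
  imports Defs
begin

(*
  Every premise set Z \<in> Con gets a fresh token, token Z, read as "the default reasoning has
  adopted Z as its premises". The defaults are Z : token Z and token Z : a for each a in
  Cn Z, the union of all Y with Z |~ Y. A set is consistent when its A-part is consistent in
  Con and, if it carries token Z, all its other elements lie in Cn Z; so it carries at most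
  one token.

  An extension y of X must fire some token Z with Z \<subseteq> X (otherwise y = X, and then the
  default X : token X would fire), and consistency of y gives X \<subseteq> Cn Z, i.e. Z |~ X. By cut,
  Cn X \<subseteq> Cn Z, and the defaults token Z : a put all of Cn X into y. Conversely, Cn X
  together with token X is an extension of X. Hence the skeptical consequences of X are the
  finite subsets of Cn X, which by reflexivity, cut and conjunction are the Y with X |~ Y.
*)

lemma consistent_subset:
  "consistent B ConS S \<Longrightarrow> T \<subseteq> S \<Longrightarrow> consistent B ConS T"
  unfolding consistent_def by blast

lemma phi_mono: "i \<le> j \<Longrightarrow> phi B ConS Delta x S i \<subseteq> phi B ConS Delta x S j"
  by (induction j) (auto simp: le_Suc_eq)

lemma subset_Phi: "x \<subseteq> Phi B ConS Delta x S"
  unfolding Phi_def by (metis UNIV_I UN_upper phi.simps(1))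

lemma finite_subset_Phi_imp_subset_phi:
  "finite P \<Longrightarrow> P \<subseteq> Phi B ConS Delta x S \<Longrightarrow> \<exists>i. P \<subseteq> phi B ConS Delta x S i"
proof (induction P rule: finite_induct)
  case (insert a P)
  then obtain i j where "a \<in> phi B ConS Delta x S i" "P \<subseteq> phi B ConS Delta x S j"
    by (auto simp: Phi_def)
  moreover have "phi B ConS Delta x S i \<subseteq> phi B ConS Delta x S (max i j)"
    and "phi B ConS Delta x S j \<subseteq> phi B ConS Delta x S (max i j)"
    by (simp_all add: phi_mono)
  ultimately show ?case
    by blast
qed simp

lemma Phi_closed:
  assumes "(P, a) \<in> Delta" "finite P" "P \<subseteq> Phi B ConS Delta x S"
    and "consistent B ConS ({a} \<union> S)"
  shows "a \<in> Phi B ConS Delta x S"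
proof -
  obtain i where "P \<subseteq> phi B ConS Delta x S i"
    using finite_subset_Phi_imp_subset_phi assms(2,3) by blast
  then have "a \<in> phi B ConS Delta x S (Suc i)"
    using assms(1,4) by auto
  then show ?thesis
    unfolding Phi_def by blast
qed

lemma Phi_least:
  assumes "x \<subseteq> T"
    and "\<And>P a. (P, a) \<in> Delta \<Longrightarrow> P \<subseteq> T \<Longrightarrow> consistent B ConS ({a} \<union> S) \<Longrightarrow> a \<in> T"
  shows "Phi B ConS Delta x S \<subseteq> T"
proof -
  have "phi B ConS Delta x S i \<subseteq> T" for i
  proof (induction i)
    case 0
    show ?case using assms(1) by simp
  next
    case (Suc i)
    then show ?case using assms(2) by (auto dest: subset_trans)
  qed
  then show ?thesis
    unfolding Phi_def by blast
qed

lemma extension_consistent: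
  assumes "extension B ConS Delta x y"
  shows "consistent B ConS y"
proof (rule ccontr)
  assume inconsistent: "\<not> consistent B ConS y"
  then have "\<not> consistent B ConS ({a} \<union> y)" for a
    using consistent_subset by blast
  then have "Phi B ConS Delta x y \<subseteq> x"
    by (intro Phi_least) simp_all
  moreover have "Phi B ConS Delta x y = y" "consistent B ConS x"
    using assms unfolding extension_def by simp_all
  ultimately show False
    using inconsistent consistent_subset by metis
qed

definition token :: "'a set \<Rightarrow> 'a + 'a set set" where
  "token Z = Inr {Z}"

lemma token_eq_iff [simp]: "token Z = token W \<longleftrightarrow> Z = W"
  and Inl_neq_token [simp]: "Inl a \<noteq> token Z" "token Z \<noteq> Inl a"
  unfolding token_def by auto

lemma token_notin_Inl_image [simp]: "token Z \<notin> Inl ` X"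
  and vimage_Inl_insert_token [simp]: "Inl -` insert (token Z) S = Inl -` S"
  unfolding token_def by auto

locale nonmonotonic_system =
  fixes A :: "'a set" and Con :: "'a set set" and rel :: "'a set \<Rightarrow> 'a set \<Rightarrow> bool"
  assumes Con_finite: "X \<in> Con \<Longrightarrow> finite X"
    and Con_subset: "X \<in> Con \<Longrightarrow> X \<subseteq> A"
    and rel_Con: "rel X Y \<Longrightarrow> X \<in> Con \<and> Y \<in> Con"
    and Con_downward: "X \<subseteq> Y \<Longrightarrow> Y \<in> Con \<Longrightarrow> X \<in> Con"
    and Con_singleton: "a \<in> A \<Longrightarrow> {a} \<in> Con"
    and rel_Un_Con: "rel X T \<Longrightarrow> X \<union> T \<in> Con"
    and rel_reflexive: "X \<in> Con \<Longrightarrow> Y \<subseteq> X \<Longrightarrow> rel X Y"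
    and rel_cut: "rel X T \<Longrightarrow> rel (T \<union> X) Y \<Longrightarrow> rel X Y"
    and rel_Un: "rel X Y \<Longrightarrow> rel X Z \<Longrightarrow> rel X (Y \<union> Z)"

lemma ans_system_iff_nonmonotonic_system:
  "ans_system A Con rel \<longleftrightarrow> nonmonotonic_system A Con rel"
  unfolding ans_system_def nonmonotonic_system_def by (simp only: Ball_def) meson

context nonmonotonic_system
begin

definition Cn :: "'a set \<Rightarrow> 'a set" where
  "Cn X = \<Union>{Y. rel X Y}"

lemma rel_subset_Cn: "rel X Y \<Longrightarrow> Y \<subseteq> Cn X"
  unfolding Cn_def by blast

lemma subset_Cn: "X \<in> Con \<Longrightarrow> X \<subseteq> Cn X"
  using rel_reflexive rel_subset_Cn by blast

lemma Cn_subset_A: "Cn X \<subseteq> A"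
  unfolding Cn_def using rel_Con Con_subset by blast

lemma rel_singleton:
  assumes "rel X Y" "a \<in> Y"
  shows "rel X {a}"
proof -
  have "Y \<union> X \<in> Con"
    using rel_Un_Con[OF assms(1)] by (simp add: Un_commute)
  then have "rel (Y \<union> X) {a}"
    using rel_reflexive assms(2) by blast
  with assms(1) show ?thesis
    by (rule rel_cut)
qed

lemma rel_iff_subset_Cn:
  assumes "X \<in> Con" "finite Y"
  shows "rel X Y \<longleftrightarrow> Y \<subseteq> Cn X"
proof
  show "Y \<subseteq> Cn X \<Longrightarrow> rel X Y"
    using assms(2)
  proof (induction Y rule: finite_induct)
    case empty
    then show ?case using rel_reflexive assms(1) by blast
  next
    case (insert a Y)
    then obtain Y' where "rel X Y'" "a \<in> Y'"
      unfolding Cn_def by blast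
    then have "rel X {a}"
      by (rule rel_singleton)
    with insert show ?case
      using rel_Un[of X "{a}" Y] by simp
  qed
qed (rule rel_subset_Cn)

lemma finite_subset_Cn_Con: "X \<in> Con \<Longrightarrow> finite P \<Longrightarrow> P \<subseteq> Cn X \<Longrightarrow> P \<in> Con"
  using rel_iff_subset_Cn rel_Con by blast

lemma Cn_subset_Cn_if_rel:
  assumes "Z \<subseteq> X" "rel Z X"
  shows "Cn X \<subseteq> Cn Z"
proof
  fix a
  assume "a \<in> Cn X"
  then obtain Y where "rel X Y" "a \<in> Y"
    unfolding Cn_def by blast
  moreover have "X \<union> Z = X"
    using assms(1) by blast
  ultimately have "rel Z Y"
    using rel_cut[OF assms(2)] by simp
  with \<open>a \<in> Y\<close> show "a \<in> Cn Z"
    using rel_subset_Cn by blast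
qed

definition tokens :: "('a + 'a set set) set" where
  "tokens = Inl ` A \<union> token ` Con"

definition admissible :: "('a + 'a set set) set \<Rightarrow> bool" where
  "admissible S \<longleftrightarrow> S \<subseteq> tokens \<and> consistent A Con (Inl -` S) \<and>
     (\<forall>Z. token Z \<in> S \<longrightarrow> S \<subseteq> insert (token Z) (Inl ` Cn Z))"

definition Con_tokens :: "('a + 'a set set) set set" where
  "Con_tokens = {F. finite F \<and> admissible F}"

definition defaults :: "(('a + 'a set set) set \<times> ('a + 'a set set)) set" where
  "defaults = {(Inl ` Z, token Z) | Z. Z \<in> Con} \<union> {({token Z}, Inl a) | Z a. Z \<in> Con \<and> a \<in> Cn Z}"

lemma admissible_subset:
  assumes "admissible S" "T \<subseteq> S"
  shows "admissible T"
proof -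
  have "consistent A Con (Inl -` T)"
    using assms consistent_subset[of A Con "Inl -` S" "Inl -` T"] unfolding admissible_def by blast
  with assms show ?thesis
    unfolding admissible_def by blast
qed

lemma admissible_Inl_image: "Z \<in> Con \<Longrightarrow> admissible (Inl ` Z)"
  unfolding admissible_def consistent_def tokens_def
  using Con_subset Con_downward by (auto simp: inj_vimage_image_eq)

lemma admissible_token_Cn:
  assumes "X \<in> Con"
  shows "admissible (insert (token X) (Inl ` Cn X))"
proof -
  have "consistent A Con (Cn X)"
    unfolding consistent_def using Cn_subset_A finite_subset_Cn_Con[OF assms] by blast
  moreover have "insert (token X) (Inl ` Cn X) \<subseteq> tokens"
    unfolding tokens_def using assms Cn_subset_A by blast
  ultimately show ?thesis
    unfolding admissible_def by (auto simp: inj_vimage_image_eq)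
qed

lemma admissible_with_token_iff:
  assumes "token Z \<in> S"
  shows "admissible S \<longleftrightarrow> Z \<in> Con \<and> S \<subseteq> insert (token Z) (Inl ` Cn Z)"
proof
  assume "admissible S"
  then have "token Z \<in> tokens" "S \<subseteq> insert (token Z) (Inl ` Cn Z)"
    using assms unfolding admissible_def by blast+
  then show "Z \<in> Con \<and> S \<subseteq> insert (token Z) (Inl ` Cn Z)"
    unfolding tokens_def by auto
qed (use admissible_token_Cn admissible_subset in blast)

lemma consistent_iff_admissible: "consistent tokens Con_tokens S \<longleftrightarrow> admissible S"
proof
  assume "admissible S"
  then show "consistent tokens Con_tokens S"
    unfolding consistent_def Con_tokens_def using admissible_subset admissible_def by blast
next
  assume consistent: "consistent tokens Con_tokens S"
  then have S_tokens: "S \<subseteq> tokens"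
    unfolding consistent_def by blast
  have finite_admissible: "admissible F" if "finite F" "F \<subseteq> S" for F
    using consistent that unfolding consistent_def Con_tokens_def by blast
  have "consistent A Con (Inl -` S)"
    unfolding consistent_def
  proof (intro conjI allI impI)
    show "Inl -` S \<subseteq> A"
      using S_tokens unfolding tokens_def by auto
    fix P
    assume P: "finite P \<and> P \<subseteq> Inl -` S"
    then have "admissible (Inl ` P)"
      by (intro finite_admissible) auto
    with P show "P \<in> Con"
      unfolding admissible_def consistent_def by (simp add: inj_vimage_image_eq)
  qed
  moreover have "S \<subseteq> insert (token Z) (Inl ` Cn Z)" if "token Z \<in> S" for Z
  proof
    fix b
    assume "b \<in> S"
    with that have "admissible {token Z, b}"
      by (intro finite_admissible) auto
    then show "b \<in> insert (token Z) (Inl ` Cn Z)"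
      using admissible_with_token_iff[of Z "{token Z, b}"] by simp
  qed
  ultimately show "admissible S"
    using S_tokens unfolding admissible_def by blast
qed

lemma Inl_image_in_Con_tokens_iff: "Inl ` Z \<in> Con_tokens \<longleftrightarrow> Z \<in> Con"
proof
  assume "Inl ` Z \<in> Con_tokens"
  then have "finite Z" "consistent A Con Z"
    unfolding Con_tokens_def admissible_def
    by (simp_all add: finite_image_iff inj_vimage_image_eq)
  then show "Z \<in> Con"
    unfolding consistent_def by blast
qed (simp add: Con_tokens_def Con_finite admissible_Inl_image)

lemma token_in_Con_tokens: "Z \<in> Con \<Longrightarrow> {token Z} \<in> Con_tokens"
  unfolding Con_tokens_def using admissible_token_Cn admissible_subset by blast

(* The hypothesis matters only for A = {}; otherwise it follows from Con_singleton and
   Con_downward. *)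
lemma normal_default_structure:
  assumes "{} \<in> Con"
  shows "normal_default_structure tokens Con_tokens defaults"
  unfolding normal_default_structure_def
proof (intro conjI ballI allI impI)
  show "{} \<in> Con_tokens"
    using assms Inl_image_in_Con_tokens_iff[of "{}"] by simp
  show "finite F" "F \<subseteq> tokens" if "F \<in> Con_tokens" for F
    using that unfolding Con_tokens_def admissible_def by blast+
  show "F \<in> Con_tokens" if "F \<subseteq> G \<and> G \<in> Con_tokens" for F G
    using that admissible_subset finite_subset unfolding Con_tokens_def by blast
  show "{b} \<in> Con_tokens" if "b \<in> tokens" for b
    using that Inl_image_in_Con_tokens_iff[of "{a}" for a] Con_singleton token_in_Con_tokens
    unfolding tokens_def by auto
  show "case d of (P, a) \<Rightarrow> P \<in> Con_tokens \<and> a \<in> tokens" if "d \<in> defaults" for d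
    using that Inl_image_in_Con_tokens_iff token_in_Con_tokens Cn_subset_A
    unfolding defaults_def tokens_def by blast
qed

lemma defaultsE:
  assumes "(P, a) \<in> defaults"
  obtains Z where "Z \<in> Con" "P = Inl ` Z" "a = token Z"
  | Z b where "Z \<in> Con" "b \<in> Cn Z" "P = {token Z}" "a = Inl b"
  using assms unfolding defaults_def by blast

lemma token_in_Phi:
  assumes "X \<in> Con" "admissible (insert (token X) y)"
  shows "token X \<in> Phi tokens Con_tokens defaults (Inl ` X) y"
proof (rule Phi_closed)
  show "(Inl ` X, token X) \<in> defaults"
    using assms(1) unfolding defaults_def by blast
qed (use assms Con_finite subset_Phi consistent_iff_admissible in simp_all)

lemma Inl_in_Phi:
  assumes "Z \<in> Con" "b \<in> Cn Z" "token Z \<in> Phi tokens Con_tokens defaults x y"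
    and "admissible (insert (Inl b) y)"
  shows "Inl b \<in> Phi tokens Con_tokens defaults x y"
proof (rule Phi_closed)
  show "({token Z}, Inl b) \<in> defaults"
    using assms(1,2) unfolding defaults_def by blast
qed (use assms consistent_iff_admissible in simp_all)

lemma extension_token_Cn:
  assumes "X \<in> Con"
  shows "extension tokens Con_tokens defaults (Inl ` X) (insert (token X) (Inl ` Cn X))"
proof -
  define y where "y = insert (token X) (Inl ` Cn X)"
  let ?Phi = "Phi tokens Con_tokens defaults (Inl ` X) y"
  have y_admissible: "admissible y"
    unfolding y_def using admissible_token_Cn[OF assms] .
  have "?Phi \<subseteq> y"
  proof (rule Phi_least)
    show "Inl ` X \<subseteq> y"
      using subset_Cn[OF assms] unfolding y_def by blast
    fix P a
    assume "(P, a) \<in> defaults" "P \<subseteq> y" "consistent tokens Con_tokens ({a} \<union> y)"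
    then have insert_admissible: "admissible (insert a y)"
      using consistent_iff_admissible by simp
    from \<open>(P, a) \<in> defaults\<close> show "a \<in> y"
    proof (cases rule: defaultsE)
      case (1 Z)
      then have "token X \<in> insert (token Z) (Inl ` Cn Z)"
        using insert_admissible admissible_with_token_iff[of Z "insert a y"] unfolding y_def by blast
      with 1 show ?thesis
        unfolding y_def by simp
    next
      case (2 Z b)
      then show ?thesis
        using \<open>P \<subseteq> y\<close> unfolding y_def by auto
    qed
  qed
  moreover have token_X: "token X \<in> ?Phi"
    using token_in_Phi assms y_admissible unfolding y_def by simp
  moreover have "Inl b \<in> ?Phi" if "b \<in> Cn X" for b
    using Inl_in_Phi[OF assms that token_X] y_admissible that unfolding y_def
    by (simp add: insert_absorb)
  ultimately have "?Phi = y"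
    unfolding y_def by blast
  then show ?thesis
    unfolding extension_def y_def consistent_iff_admissible
    using admissible_Inl_image[OF assms] by simp
qed

lemma extension_has_token:
  assumes "X \<in> Con" and ext: "extension tokens Con_tokens defaults (Inl ` X) y"
  shows "\<exists>Z\<in>Con. Z \<subseteq> X \<and> token Z \<in> y"
proof (rule ccontr)
  assume no_token: "\<not> (\<exists>Z\<in>Con. Z \<subseteq> X \<and> token Z \<in> y)"
  let ?Phi = "Phi tokens Con_tokens defaults (Inl ` X) y"
  have Phi_y: "?Phi = y"
    using ext unfolding extension_def by blast
  have X_Phi: "Inl ` X \<subseteq> ?Phi"
    by (rule subset_Phi)
  have "?Phi \<subseteq> Inl ` X"
  proof (rule Phi_least)
    fix P a
    assume "(P, a) \<in> defaults" and P: "P \<subseteq> Inl ` X"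
      and a_consistent: "consistent tokens Con_tokens ({a} \<union> y)"
    from \<open>(P, a) \<in> defaults\<close> show "a \<in> Inl ` X"
    proof (cases rule: defaultsE)
      case (1 Z)
      have "token Z \<in> ?Phi"
        using 1 P X_Phi Con_finite a_consistent
        by (intro Phi_closed[OF \<open>(P, a) \<in> defaults\<close>[unfolded 1]]) auto
      moreover have "Z \<subseteq> X"
        using P 1 by (simp add: inj_image_subset_iff)
      ultimately show ?thesis
        using no_token 1 Phi_y by blast
    qed (use P in auto)
  qed simp
  then have "y = Inl ` X"
    using Phi_y X_Phi by blast
  then have "admissible (insert (token X) y)"
    by (auto intro: admissible_subset[OF admissible_token_Cn[OF \<open>X \<in> Con\<close>]]
        dest: subset_Cn[OF \<open>X \<in> Con\<close>, THEN subsetD])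
  then have "token X \<in> ?Phi"
    by (rule token_in_Phi[OF \<open>X \<in> Con\<close>])
  with no_token \<open>X \<in> Con\<close> show False
    unfolding Phi_y by blast
qed

lemma Inl_Cn_subset_extension:
  assumes "X \<in> Con" and ext: "extension tokens Con_tokens defaults (Inl ` X) y"
  shows "Inl ` Cn X \<subseteq> y"
proof -
  have Phi_y: "Phi tokens Con_tokens defaults (Inl ` X) y = y"
    using ext unfolding extension_def by blast
  obtain Z where "Z \<in> Con" "Z \<subseteq> X" and token_Z: "token Z \<in> y"
    using extension_has_token[OF assms] by blast
  have "admissible y"
    using extension_consistent[OF ext] consistent_iff_admissible by blast
  then have y_Cn_Z: "y \<subseteq> insert (token Z) (Inl ` Cn Z)"
    using admissible_with_token_iff[OF token_Z] by simp
  moreover have "Inl ` X \<subseteq> y"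
    using subset_Phi[of "Inl ` X" tokens Con_tokens defaults y] Phi_y by simp
  ultimately have "Inl ` X \<subseteq> insert (token Z) (Inl ` Cn Z)"
    by blast
  then have "X \<subseteq> Cn Z"
    by (auto simp: inj_image_mem_iff)
  then have "rel Z X"
    using rel_iff_subset_Cn[OF \<open>Z \<in> Con\<close> Con_finite[OF \<open>X \<in> Con\<close>]] by simp
  then have Cn_X_Z: "Cn X \<subseteq> Cn Z"
    using Cn_subset_Cn_if_rel \<open>Z \<subseteq> X\<close> by simp
  have "Inl b \<in> y" if "b \<in> Cn Z" for b
  proof -
    have "admissible (insert (Inl b) y)"
      using admissible_with_token_iff[of Z "insert (Inl b) y"] token_Z \<open>Z \<in> Con\<close> y_Cn_Z that
      by auto
    with token_Z show ?thesis
      using Inl_in_Phi[OF \<open>Z \<in> Con\<close> that, of "Inl ` X" y] unfolding Phi_y by blast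
  qed
  with Cn_X_Z show ?thesis
    by blast
qed

lemma skeptical_iff_subset_Cn:
  assumes "X \<in> Con"
  shows "skeptical tokens Con_tokens defaults (Inl ` X) (Inl ` Y) \<longleftrightarrow> finite Y \<and> Y \<subseteq> Cn X"
proof
  assume "skeptical tokens Con_tokens defaults (Inl ` X) (Inl ` Y)"
  then have "finite Y"
    and skeptical: "\<And>y. extension tokens Con_tokens defaults (Inl ` X) y \<Longrightarrow> Inl ` Y \<subseteq> y"
    unfolding skeptical_def by (simp_all add: finite_image_iff)
  moreover have "Inl ` Y \<subseteq> insert (token X) (Inl ` Cn X)"
    by (rule skeptical[OF extension_token_Cn[OF assms]])
  ultimately show "finite Y \<and> Y \<subseteq> Cn X"
    by (auto simp: finite_image_iff inj_image_mem_iff)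
next
  assume Y: "finite Y \<and> Y \<subseteq> Cn X"
  show "skeptical tokens Con_tokens defaults (Inl ` X) (Inl ` Y)"
    unfolding skeptical_def
  proof (intro conjI allI impI)
    show "Inl ` X \<in> Con_tokens"
      using assms Inl_image_in_Con_tokens_iff by simp
    show "finite (Inl ` Y)"
      using Y by simp
    have "Inl ` Y \<subseteq> Inl ` Cn X"
      using Y by (simp add: image_mono)
    then show "Inl ` Y \<subseteq> tokens"
      unfolding tokens_def using image_mono[OF Cn_subset_A] by (meson le_supI1 order_trans)
    show "Inl ` Y \<subseteq> y" if "extension tokens Con_tokens defaults (Inl ` X) y" for y
      using \<open>Inl ` Y \<subseteq> Inl ` Cn X\<close> Inl_Cn_subset_extension[OF assms that] by (rule order_trans)
  qed
qed

lemma rel_iff_skeptical: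
  assumes "X \<in> Con" "Y \<in> Con"
  shows "rel X Y \<longleftrightarrow> skeptical tokens Con_tokens defaults (Inl ` X) (Inl ` Y)"
  using rel_iff_subset_Cn[OF assms(1) Con_finite[OF assms(2)]] skeptical_iff_subset_Cn[OF assms(1)]
    Con_finite[OF assms(2)] by simp

lemma Inl_image_Con_iff: "X \<in> (\<lambda>Z. Inl ` Z) ` Con \<longleftrightarrow> X \<subseteq> Inl ` A \<and> X \<in> Con_tokens"
proof
  assume "X \<in> (\<lambda>Z. Inl ` Z) ` Con"
  then obtain Z where "Z \<in> Con" "X = Inl ` Z"
    by blast
  then show "X \<subseteq> Inl ` A \<and> X \<in> Con_tokens"
    using Con_subset Inl_image_in_Con_tokens_iff by auto
next
  assume X: "X \<subseteq> Inl ` A \<and> X \<in> Con_tokens"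
  then have X_eq: "X = Inl ` (Inl -` X)"
    by auto
  with X have "Inl -` X \<in> Con"
    using Inl_image_in_Con_tokens_iff by metis
  with X_eq show "X \<in> (\<lambda>Z. Inl ` Z) ` Con"
    by (rule image_eqI)
qed

end

theorem theorem5:
  fixes A :: "'a set" and Con :: "'a set set" and rel :: "'a set \<Rightarrow> 'a set \<Rightarrow> bool"
  assumes "ans_system A Con rel"
    and "{} \<in> Con"
  shows "\<exists>(B :: ('a + 'a set set) set) ConS Delta.
           normal_default_structure B ConS Delta \<and>
           Inl ` A \<subseteq> B \<and>
           (\<forall>X. X \<subseteq> B \<longrightarrow> (X \<in> (\<lambda>Z. Inl ` Z) ` Con \<longleftrightarrow> X \<subseteq> Inl ` A \<and> X \<in> ConS)) \<and>
           (\<forall>X\<in>Con. \<forall>Y\<in>Con. rel X Y \<longleftrightarrow> skeptical B ConS Delta (Inl ` X) (Inl ` Y))"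
proof -
  interpret nonmonotonic_system A Con rel
    using assms(1) ans_system_iff_nonmonotonic_system by blast
  show ?thesis
  proof (intro exI conjI allI impI ballI)
    show "normal_default_structure tokens Con_tokens defaults"
      using assms(2) by (rule normal_default_structure)
    show "Inl ` A \<subseteq> tokens"
      unfolding tokens_def by blast
  qed (simp_all add: Inl_image_Con_iff rel_iff_skeptical)
qed

end
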